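(* Let $K$ be a field, $c\in K\setminus\{0\}$, $n\ge 1$, and let $f$ be a $c$-frieze of order $n$ over $K$. Put $s=f(0,n)$ and $t=f(1,n+1)$. Let $k$ be an integer with $-1\le k\le n+2$. (a) If $k$ is even, then for all $i\in\mathbb{Z}$: $f(2i,2i+k-1)=f(2i+n+3,2i+k+n+2)$ and $f(2i+1,2i+k)=f(2i+n+4,2i+k+n+3)$. (b) If $k$ is odd, then for all $i\in\mathbb{Z}$: $f(2i,2i+k-1)=\frac{(-c)^{n+1}}{t^2}f(2i+n+3,2i+k+n+2)$ and $f(2i+1,2i+k)=\frac{(-c)^{n+1}}{s^2}f(2i+n+4,2i+k+n+3)$. Furthermore, if $k$ is odd and $n$ is even, then $f(i,i+k-1)=f(i+2n+6,i+k+2n+5)$ for all $i\in\mathbb{Z}$.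
   Context: For a nonzero $c\in K$, the $c$-continuant polynomials $P_k=P_k^c$ ($k\ge -1$) are defined by $P_{-1}=0$, $P_0=1$ and, for $k\ge1$, $P_k(x_1,\dots,x_k)=x_kP_{k-1}(x_1,\dots,x_{k-1})+cP_{k-2}(x_1,\dots,x_{k-2})$. A family $(x_i)_{i\in\mathbb{Z}}$ of elements of $K$ is $n$-admissible if $P_{n+2}(x_i,\dots,x_{i+n+1})=0$ for all $i\in\mathbb{Z}$. Let $\mathbb{B}_n=\{(i,j)\in\mathbb{Z}^2:-2\le j-i\le n+1\}$. A $c$-frieze of order $n$ is a function $f:\mathbb{B}_n\to K$ for which there is an $n$-admissible family $(x_i)$ with $f(i,j)=P_{j-i+1}(x_i,\dots,x_j)$ for all $(i,j)\in\mathbb{B}_n$ (so $f(i,i-2)=0$, $f(i,i-1)=1$, $f(i,i)=x_i$). For $-1\le k\le n+2$, row $k$ of $f$ consists of the values $f(i,i+k-1)$, $i\in\mathbb{Z}$. It is known that $st=(-c)^{n+1}$, so $s,t\neq0$. *)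

theory Defs
  imports Main
begin

text \<open>c-continuant polynomials evaluated on a consecutive block of a family:
  cont c x i k = P_k(x_i, ..., x_{i+k-1}) for k >= 0.\<close>
fun cont :: "'a::field \<Rightarrow> (int \<Rightarrow> 'a) \<Rightarrow> int \<Rightarrow> nat \<Rightarrow> 'a" where
  "cont c x i 0 = 1"
| "cont c x i (Suc 0) = x i"
| "cont c x i (Suc (Suc k)) = x (i + int k + 1) * cont c x i (Suc k) + c * cont c x i k"

definition contI :: "'a::field \<Rightarrow> (int \<Rightarrow> 'a) \<Rightarrow> int \<Rightarrow> int \<Rightarrow> 'a" where
  "contI c x i k = (if k < 0 then 0 else cont c x i (nat k))"

definition admissible :: "'a::field \<Rightarrow> nat \<Rightarrow> (int \<Rightarrow> 'a) \<Rightarrow> bool" where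
  "admissible c n x \<longleftrightarrow> (\<forall>i::int. cont c x i (n + 2) = 0)"

definition in_Bn :: "nat \<Rightarrow> int \<Rightarrow> int \<Rightarrow> bool" where
  "in_Bn n i j \<longleftrightarrow> -2 \<le> j - i \<and> j - i \<le> int n + 1"

text \<open>A c-frieze of order n; f is only meaningful on B_n, its values outside are irrelevant.\<close>
definition is_frieze :: "'a::field \<Rightarrow> nat \<Rightarrow> (int \<Rightarrow> int \<Rightarrow> 'a) \<Rightarrow> bool" where
  "is_frieze c n f \<longleftrightarrow> (\<exists>x. admissible c n x \<and>
      (\<forall>i j. in_Bn n i j \<longrightarrow> f i j = contI c x i (j - i + 1)))"

end

theory Submission
  imports Defs
begin

text \<open>Write a_j = P_{n+1}(x_j, ..., x_{j+n}). The determinant identity for continuants together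
  with P_{n+2} = 0 gives a_j a_{j+1} = (-c)^{n+1}, so a is 2-periodic and never zero.
  Expanding P_{n+3}(x_j, ..., x_{j+n+2}) = 0 at both ends yields the glide relation
  x_{j+n+3} = (a_{j+1} / a_j) x_j: the shifted family is the original one multiplied
  alternately by a_1/a_0 and its inverse. Such a rescaling fixes even continuants and
  multiplies odd ones by one of the two factors; with s = a_0 and t = a_1 this is the theorem.\<close>

lemma cont_Suc_Suc_left:
  "cont c x i (Suc (Suc k)) = x i * cont c x (i + 1) (Suc k) + c * cont c x (i + 2) k"
proof (induction k rule: induct_nat_012)
  case (ge2 k)
  have "cont c x i (Suc (Suc (Suc (Suc k))))
      = x (i + int (Suc (Suc k)) + 1) * cont c x i (Suc (Suc (Suc k))) + c * cont c x i (Suc (Suc k))"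
    "cont c x (i + 1) (Suc (Suc (Suc k)))
      = x (i + int (Suc (Suc k)) + 1) * cont c x (i + 1) (Suc (Suc k)) + c * cont c x (i + 1) (Suc k)"
    "cont c x (i + 2) (Suc (Suc k))
      = x (i + int (Suc (Suc k)) + 1) * cont c x (i + 2) (Suc k) + c * cont c x (i + 2) k"
    by (simp_all only: cont.simps(3)) (simp_all add: algebra_simps)
  then show ?case
    unfolding ge2 by (simp add: algebra_simps)
qed (simp_all add: algebra_simps)

lemma cont_determinant:
  "cont c x i (Suc (Suc m)) * cont c x (i + 1) m - cont c x (i + 1) (Suc m) * cont c x i (Suc m)
     = - ((-c) ^ Suc m)"
proof (induction m)
  case (Suc m)
  have "cont c x i (Suc (Suc (Suc m)))
      = x (i + int (Suc m) + 1) * cont c x i (Suc (Suc m)) + c * cont c x i (Suc m)"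
    "cont c x (i + 1) (Suc (Suc m))
      = x (i + int (Suc m) + 1) * cont c x (i + 1) (Suc m) + c * cont c x (i + 1) m"
    by (simp_all only: cont.simps(3)) (simp_all add: algebra_simps)
  then have "cont c x i (Suc (Suc (Suc m))) * cont c x (i + 1) (Suc m)
               - cont c x (i + 1) (Suc (Suc m)) * cont c x i (Suc (Suc m))
           = - c * (cont c x i (Suc (Suc m)) * cont c x (i + 1) m
               - cont c x (i + 1) (Suc m) * cont c x i (Suc m))"
    by (simp add: algebra_simps)
  also have "\<dots> = - ((-c) ^ Suc (Suc m))"
    unfolding Suc by simp
  finally show ?case .
qed (simp add: algebra_simps)

lemma cont_shift:
  "cont c (\<lambda>j. x (j + d)) i k = cont c x (i + d) k"
  by (induction k rule: induct_nat_012) (simp_all add: algebra_simps)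

lemma cont_alternating_scale:
  assumes y: "\<And>j. y j = (if even j then p else q) * x j" and pq: "p * q = 1"
  shows "cont c y i k = (if odd k then (if even i then p else q) else 1) * cont c x i k"
proof (induction k rule: induct_nat_012)
  case (ge2 k)
  have "even (i + int k + 1) \<longleftrightarrow> (even i \<longleftrightarrow> odd k)" by simp
  then show ?case
    using ge2 pq by (cases "even k") (auto simp: y algebra_simps)
qed (simp_all add: y)

lemma periodic_mod:
  fixes g :: "int \<Rightarrow> 'b" and p :: int
  assumes "\<And>j. g (j + p) = g j"
  shows "g j = g (j mod p)"
proof -
  have "g (r + p * m) = g r" for r m
  proof (induction m rule: int_induct[where k = 0])
    case (step1 m)
    then show ?case using assms[of "r + p * m"] by (simp add: algebra_simps)
  next
    case (step2 m)
    then show ?case using assms[of "r + p * (m - 1)"] by (simp add: algebra_simps)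
  qed simp
  from this[of "j mod p" "j div p"] show ?thesis by (simp add: algebra_simps)
qed

lemma admissible_cont_vanishes:
  "admissible c n x \<Longrightarrow> cont c x i (Suc (Suc n)) = 0"
  unfolding admissible_def by (metis add_2_eq_Suc')

lemma admissible_row_product:
  assumes "admissible c n x"
  shows "cont c x j (Suc n) * cont c x (j + 1) (Suc n) = (-c) ^ Suc n"
  using cont_determinant[of c x j n]
  unfolding admissible_cont_vanishes[OF assms] by (simp add: mult.commute minus_equation_iff)

lemma admissible_row_nonzero:
  assumes "admissible c n x" "c \<noteq> 0"
  shows "cont c x j (Suc n) \<noteq> 0"
  using admissible_row_product[OF assms(1), of j] assms(2) by auto

lemma admissible_row_2periodic:
  assumes "admissible c n x" "c \<noteq> 0"
  shows "cont c x (j + 2) (Suc n) = cont c x j (Suc n)"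
proof -
  have "cont c x (j + 1) (Suc n) * cont c x (j + 2) (Suc n)
      = cont c x (j + 1) (Suc n) * cont c x j (Suc n)"
    using admissible_row_product[OF assms(1), of j] admissible_row_product[OF assms(1), of "j + 1"]
    by (simp add: algebra_simps)
  with admissible_row_nonzero[OF assms] show ?thesis by simp
qed

lemma admissible_row_parity:
  assumes "admissible c n x" "c \<noteq> 0"
  shows "cont c x j (Suc n) = (if even j then cont c x 0 (Suc n) else cont c x 1 (Suc n))"
proof -
  have "cont c x j (Suc n) = cont c x (j mod 2) (Suc n)"
    using periodic_mod[where g = "\<lambda>j. cont c x j (Suc n)"] admissible_row_2periodic[OF assms]
    by blast
  then show ?thesis by (simp add: even_iff_mod_2_eq_zero odd_iff_mod_2_eq_one)
qed

lemma admissible_glide: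
  assumes "admissible c n x" "c \<noteq> 0"
  shows "x (j + int n + 3) * cont c x j (Suc n) = x j * cont c x (j + 1) (Suc n)"
proof -
  have "x j * cont c x (j + 1) (Suc n) + c * cont c x (j + 2) n = 0"
    using cont_Suc_Suc_left[of c x j n] by (simp only: admissible_cont_vanishes[OF assms(1)])
  moreover have "x (j + int n + 3) * cont c x (j + 2) (Suc n) + c * cont c x (j + 2) n = 0"
  proof -
    have "j + 2 + int n + 1 = j + int n + 3" by simp
    then show ?thesis
      using cont.simps(3)[of c x "j + 2" n] by (simp only: admissible_cont_vanishes[OF assms(1)])
  qed
  ultimately show ?thesis
    using admissible_row_2periodic[OF assms, of j] by (metis add_right_cancel)
qed

lemma admissible_cont_glide:
  assumes "admissible c n x" "c \<noteq> 0"
  defines "a\<^sub>0 \<equiv> cont c x 0 (Suc n)" and "a\<^sub>1 \<equiv> cont c x 1 (Suc n)"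
  shows "cont c x (i + int n + 3) m
           = (if odd m then (if even i then a\<^sub>1 / a\<^sub>0 else a\<^sub>0 / a\<^sub>1) else 1) * cont c x i m"
proof -
  have nz: "a\<^sub>0 \<noteq> 0" "a\<^sub>1 \<noteq> 0"
    unfolding a\<^sub>0_def a\<^sub>1_def using admissible_row_nonzero[OF assms(1,2)] by auto
  have "x (j + int (n + 3)) = (if even j then a\<^sub>1 / a\<^sub>0 else a\<^sub>0 / a\<^sub>1) * x j" for j
    using admissible_glide[OF assms(1,2), of j] nz
      admissible_row_parity[OF assms(1,2), of j] admissible_row_parity[OF assms(1,2), of "j + 1"]
    unfolding a\<^sub>0_def a\<^sub>1_def by (auto simp: field_simps add.assoc)
  from cont_alternating_scale[OF this] nz
  have "cont c (\<lambda>j. x (j + int (n + 3))) i m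
          = (if odd m then (if even i then a\<^sub>1 / a\<^sub>0 else a\<^sub>0 / a\<^sub>1) else 1) * cont c x i m"
    by simp
  then show ?thesis by (simp add: cont_shift add.assoc)
qed

lemma frieze_corner_product:
  assumes "is_frieze c n f"
  shows "f 0 (int n) * f 1 (int n + 1) = (-c) ^ Suc n"
proof -
  obtain x where adm: "admissible c n x"
    and fx: "\<And>i j. in_Bn n i j \<Longrightarrow> f i j = contI c x i (j - i + 1)"
    using assms unfolding is_frieze_def by blast
  have "f 0 (int n) = cont c x 0 (Suc n)" "f 1 (int n + 1) = cont c x 1 (Suc n)"
    using fx[of 0 "int n"] fx[of 1 "int n + 1"] by (simp_all add: in_Bn_def contI_def nat_add_distrib)
  with admissible_row_product[OF adm, of 0] show ?thesis by simp
qed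

lemma frieze_glide:
  assumes "c \<noteq> 0" "is_frieze c n f" "-1 \<le> k" "k \<le> int n + 2"
  defines "s \<equiv> f 0 (int n)" and "t \<equiv> f 1 (int n + 1)"
  shows "f (i + int n + 3) (i + k + int n + 2)
           = (if odd k then (if even i then t / s else s / t) else 1) * f i (i + k - 1)"
proof -
  obtain x where adm: "admissible c n x"
    and fx: "\<And>i j. in_Bn n i j \<Longrightarrow> f i j = contI c x i (j - i + 1)"
    using assms(2) unfolding is_frieze_def by blast
  have row: "f i (i + k - 1) = contI c x i k" for i
    using fx[of i "i + k - 1"] assms(3,4) by (simp add: in_Bn_def)
  have "s = cont c x 0 (Suc n)" "t = cont c x 1 (Suc n)"
    unfolding s_def t_def using fx[of 0 "int n"] fx[of 1 "int n + 1"]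
    by (simp_all add: in_Bn_def contI_def nat_add_distrib)
  with admissible_cont_glide[OF adm assms(1), of i "nat k"] row[of i] row[of "i + int n + 3"]
  show ?thesis
    by (cases "k < 0") (simp_all add: contI_def even_nat_iff algebra_simps)
qed

theorem mainTheorem1:
  fixes c :: "'a::field" and n :: nat and f :: "int \<Rightarrow> int \<Rightarrow> 'a" and k :: int
  assumes hc: "c \<noteq> 0" and hn: "n \<ge> 1" and hf: "is_frieze c n f"
    and hk: "-1 \<le> k" "k \<le> int n + 2"
  defines "s \<equiv> f 0 (int n)" and "t \<equiv> f 1 (int n + 1)"
  shows "(even k \<longrightarrow> (\<forall>i::int.
            f (2*i) (2*i + k - 1) = f (2*i + int n + 3) (2*i + k + int n + 2) \<and>
            f (2*i + 1) (2*i + k) = f (2*i + int n + 4) (2*i + k + int n + 3)))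
       \<and> (odd k \<longrightarrow> (\<forall>i::int.
            f (2*i) (2*i + k - 1) = ((-c)^(n+1) / t^2) * f (2*i + int n + 3) (2*i + k + int n + 2) \<and>
            f (2*i + 1) (2*i + k) = ((-c)^(n+1) / s^2) * f (2*i + int n + 4) (2*i + k + int n + 3)))
       \<and> (odd k \<and> even n \<longrightarrow> (\<forall>i::int.
            f i (i + k - 1) = f (i + 2 * int n + 6) (i + k + 2 * int n + 5)))"
proof -
  note glide = frieze_glide[OF hc hf hk, folded s_def t_def]
  have st: "(-c) ^ (n + 1) = s * t"
    using frieze_corner_product[OF hf] unfolding s_def t_def by simp
  with hc have "s \<noteq> 0" "t \<noteq> 0" by auto
  have even_rows: "f (2*i + int n + 3) (2*i + k + int n + 2)
                     = (if odd k then t / s else 1) * f (2*i) (2*i + k - 1)"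
    and odd_rows: "f (2*i + int n + 4) (2*i + k + int n + 3)
                     = (if odd k then s / t else 1) * f (2*i + 1) (2*i + k)"
    for i
    using glide[of "2*i"] glide[of "2*i + 1"] by (simp_all add: algebra_simps)
  have double_glide: "f (i + 2 * int n + 6) (i + k + 2 * int n + 5) = f i (i + k - 1)"
    if "odd k" "even n" for i
    using glide[of "i + int n + 3"] glide[of i] that \<open>s \<noteq> 0\<close> \<open>t \<noteq> 0\<close>
    by (simp add: algebra_simps)
  show ?thesis
    using even_rows odd_rows double_glide st \<open>s \<noteq> 0\<close> \<open>t \<noteq> 0\<close>
    by (simp add: field_simps power2_eq_square)
qed

end
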